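(* Let $f$ be an adaptive submodular utility function (see context). Then for every partial realization $\psi$, the set function $g_\psi:2^{V\setminus\mathrm{dom}(\psi)}\to\mathbb{R}_{\ge0}$ defined by $g_\psi(S)=\mathbb{E}[f(\mathrm{dom}(\psi)\cup S,\Phi)\mid\Phi\succeq\psi]$ is submodular.
   Context: $V$ is a finite set of items; each item $e$ has a random state $\Phi(e)$ in a set $O$; a realization is a map $\phi:V\to O$ and the random realization $\Phi$ has a known prior $p(\phi)=\Pr[\Phi=\phi]$. A partial realization $\psi$ is a map from a subset $\mathrm{dom}(\psi)\subseteq V$ to $O$; $\phi\succeq\psi$ means $\phi$ agrees with $\psi$ on $\mathrm{dom}(\psi)$; $\psi\subseteq\psi'$ means $\mathrm{dom}(\psi)\subseteq\mathrm{dom}(\psi')$ and they agree on $\mathrm{dom}(\psi)$. The utility $f(S,\phi)\ge0$ is defined for $S\subseteq V$ and realizations $\phi$. The conditional expected marginal utility is $\Delta(e\mid\psi)=\mathbb{E}[f(\mathrm{dom}(\psi)\cup\{e\},\Phi)-f(\mathrm{dom}(\psi),\Phi)\mid\Phi\succeq\psi]$. $f$ is adaptive submodular if $\Delta(e\mid\psi)\ge\Delta(e\mid\psi')$ for all partial realizations $\psi\subseteq\psi'$ and all $e\in V\setminus\mathrm{dom}(\psi')$. Conditional expectations are taken over partial realizations with positive probability. *)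

theory Defs
  imports "HOL-Probability.Probability"
begin

text \<open>Items are the elements of a finite type 'v (so V = UNIV), states live in type 'o.
  A realization is a total function 'v \<Rightarrow> 'o, the prior is a discrete distribution
  P :: ('v \<Rightarrow> 'o) pmf, and a partial realization is a map 'v \<rightharpoonup> 'o.\<close>

definition consistent :: "('v \<Rightarrow> 'o) \<Rightarrow> ('v \<rightharpoonup> 'o) \<Rightarrow> bool" where
  "consistent \<phi> \<psi> \<longleftrightarrow> (\<forall>x\<in>dom \<psi>. \<psi> x = Some (\<phi> x))"

definition cons_event :: "('v \<rightharpoonup> 'o) \<Rightarrow> ('v \<Rightarrow> 'o) set" where
  "cons_event \<psi> = {\<phi>. consistent \<phi> \<psi>}"

text \<open>Conditional expectation E[X(\<Phi>) | \<Phi> consistent with \<psi>] (meaningful when the event has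
  positive probability).\<close>
definition cond_exp :: "('v \<Rightarrow> 'o) pmf \<Rightarrow> ('v \<rightharpoonup> 'o) \<Rightarrow> (('v \<Rightarrow> 'o) \<Rightarrow> real) \<Rightarrow> real" where
  "cond_exp P \<psi> X = measure_pmf.expectation (cond_pmf P (cons_event \<psi>)) X"

definition cond_marg :: "('v \<Rightarrow> 'o) pmf \<Rightarrow> ('v set \<Rightarrow> ('v \<Rightarrow> 'o) \<Rightarrow> real) \<Rightarrow> 'v \<Rightarrow> ('v \<rightharpoonup> 'o) \<Rightarrow> real" where
  "cond_marg P f e \<psi> = cond_exp P \<psi> (\<lambda>\<phi>. f (insert e (dom \<psi>)) \<phi> - f (dom \<psi>) \<phi>)"

definition adaptive_submodular :: "('v \<Rightarrow> 'o) pmf \<Rightarrow> ('v set \<Rightarrow> ('v \<Rightarrow> 'o) \<Rightarrow> real) \<Rightarrow> bool" where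
  "adaptive_submodular P f \<longleftrightarrow>
     (\<forall>\<psi> \<psi>' e. \<psi> \<subseteq>\<^sub>m \<psi>' \<longrightarrow> measure_pmf.prob P (cons_event \<psi>) > 0 \<longrightarrow>
        measure_pmf.prob P (cons_event \<psi>') > 0 \<longrightarrow> e \<notin> dom \<psi>' \<longrightarrow>
        cond_marg P f e \<psi> \<ge> cond_marg P f e \<psi>')"

definition submodular_on :: "'a set \<Rightarrow> ('a set \<Rightarrow> real) \<Rightarrow> bool" where
  "submodular_on D g \<longleftrightarrow>
     (\<forall>A B. A \<subseteq> D \<longrightarrow> B \<subseteq> D \<longrightarrow> g (A \<union> B) + g (A \<inter> B) \<le> g A + g B)"

end

theory Submission
  imports Defs
begin

text \<open>Besides \<psi>, observe also the states of the items of B \<supseteq> A. By the tower property,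
  E[f(dom \<psi> \<union> S, \<Phi>) | \<Phi> \<succeq> \<psi>] is the average, over \<phi> drawn given \<psi>, of the conditional
  expectation given \<psi> extended by \<phi> on B. Hence the gain of adding e to dom \<psi> \<union> B is the
  average of the conditional marginal gains \<Delta>(e | \<psi> extended by \<phi> on B), and likewise for A.
  The extension by \<phi> on A is contained in the extension by \<phi> on B, so adaptive
  submodularity compares these gains pointwise. The resulting diminishing returns amount to
  submodularity on the finite ground set.\<close>

lemma cond_pmf_cond_pmf:
  assumes "set_pmf p \<inter> A \<inter> B \<noteq> {}"
  shows "cond_pmf (cond_pmf p A) B = cond_pmf p (A \<inter> B)"
proof (rule pmf_eqI)
  fix x
  have A: "set_pmf p \<inter> A \<noteq> {}" and AB: "set_pmf p \<inter> (A \<inter> B) \<noteq> {}"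
    using assms by auto
  then have B: "set_pmf (cond_pmf p A) \<inter> B \<noteq> {}"
    using assms by auto
  have "measure (measure_pmf (cond_pmf p A)) B = measure p (A \<inter> B) / measure p A"
    unfolding cond_pmf.rep_eq[OF A]
    by (subst measure_uniform_measure)
      (use A in \<open>auto simp: measure_pmf.emeasure_eq_measure measure_pmf_zero_iff\<close>)
  then show "pmf (cond_pmf (cond_pmf p A) B) x = pmf (cond_pmf p (A \<inter> B)) x"
    using A AB by (simp add: pmf_cond[OF B] pmf_cond[OF A] pmf_cond[OF AB] measure_pmf_zero_iff)
qed

lemma integrable_cond_pmf:
  fixes h :: "'a \<Rightarrow> 'b::{banach, second_countable_topology}"
  assumes h: "integrable (measure_pmf p) h" and A: "set_pmf p \<inter> A \<noteq> {}"
  shows "integrable (measure_pmf (cond_pmf p A)) h"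
proof -
  have "(\<integral>\<^sup>+x. norm (h x) \<partial>measure_pmf (cond_pmf p A))
      = (\<integral>\<^sup>+x. ennreal (norm (h x)) * indicator A x \<partial>measure_pmf p) / emeasure (measure_pmf p) A"
    unfolding cond_pmf.rep_eq[OF A] by (rule nn_integral_uniform_measure) auto
  also have "\<dots> \<le> (\<integral>\<^sup>+x. norm (h x) \<partial>measure_pmf p) / emeasure (measure_pmf p) A"
    by (intro divide_right_mono_ennreal nn_integral_mono) (auto simp: indicator_def)
  also have "\<dots> < \<infinity>"
    using h A
    by (simp add: integrable_iff_bounded measure_pmf.emeasure_eq_measure measure_pmf_zero_iff
        divide_ennreal_def ennreal_mult_eq_top_iff flip: less_top)
  finally show ?thesis
    by (simp add: integrable_iff_bounded)
qed

text \<open>Tower property for conditioning on the value of k.\<close>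
lemma has_bochner_integral_cond_pmf_fibres:
  fixes h :: "'a \<Rightarrow> real" and k :: "'a \<Rightarrow> 'b"
  assumes nonneg: "\<And>x. 0 \<le> h x" and h: "integrable (measure_pmf p) h"
  shows "has_bochner_integral (measure_pmf p)
    (\<lambda>y. measure_pmf.expectation (cond_pmf p {x. k x = k y}) h) (measure_pmf.expectation p h)"
proof (rule has_bochner_integral_nn_integral)
  have "(\<integral>\<^sup>+y. ennreal (measure_pmf.expectation (cond_pmf p {x. k x = k y}) h) \<partial>measure_pmf p)
      = (\<integral>\<^sup>+y. (\<integral>\<^sup>+x. h x \<partial>measure_pmf (cond_pmf p {x. k x = k y})) \<partial>measure_pmf p)"
  proof (rule nn_integral_cong_AE, unfold AE_measure_pmf_iff, intro ballI)
    fix y assume "y \<in> set_pmf p"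
    then have "integrable (measure_pmf (cond_pmf p {x. k x = k y})) h"
      by (intro integrable_cond_pmf[OF h]) auto
    then show "ennreal (measure_pmf.expectation (cond_pmf p {x. k x = k y}) h)
        = (\<integral>\<^sup>+x. h x \<partial>measure_pmf (cond_pmf p {x. k x = k y}))"
      using nonneg by (simp add: nn_integral_eq_integral)
  qed
  also have "\<dots> = (\<integral>\<^sup>+x. h x \<partial>measure_pmf (bind_pmf p (\<lambda>y. cond_pmf p {x. k x = k y})))"
    by simp
  also have "bind_pmf p (\<lambda>y. cond_pmf p {x. k x = k y}) = p"
    by (rule bind_cond_pmf_cancel) (auto simp: eq_commute)
  also have "(\<integral>\<^sup>+x. h x \<partial>measure_pmf p) = ennreal (measure_pmf.expectation p h)"
    using h nonneg by (simp add: nn_integral_eq_integral)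
  finally show "(\<integral>\<^sup>+y. ennreal (measure_pmf.expectation (cond_pmf p {x. k x = k y}) h) \<partial>measure_pmf p)
      = ennreal (measure_pmf.expectation p h)" .
qed (use nonneg in \<open>auto intro: integral_nonneg_AE\<close>)

lemma cons_event_map_add:
  assumes "consistent \<phi> \<psi>" and "consistent \<phi> m"
  shows "cons_event (\<psi> ++ m) = cons_event \<psi> \<inter> cons_event m"
  using assms unfolding cons_event_def consistent_def
  by (auto simp: map_add_def dom_def split: option.splits) (metis not_None_eq option.inject)

lemma consistent_restrict_map_iff:
  "consistent x ((Some \<circ> \<phi>) |` B) \<longleftrightarrow> (\<forall>y\<in>B. x y = \<phi> y)"
  unfolding consistent_def dom_restrict by (auto simp: dom_def)

lemma cons_event_restrict_map:
  "cons_event ((Some \<circ> \<phi>) |` B) = {x. (Some \<circ> x) |` B = (Some \<circ> \<phi>) |` B}"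
  unfolding cons_event_def consistent_restrict_map_iff by (auto simp: fun_eq_iff restrict_map_def)

lemma consistent_map_add_restrict_map:
  "consistent \<phi> \<psi> \<Longrightarrow> consistent \<phi> (\<psi> ++ (Some \<circ> \<phi>) |` B)"
  unfolding consistent_def by (auto simp: map_add_def restrict_map_def split: option.splits)

lemma map_add_restrict_map_mono:
  assumes "consistent \<phi> \<psi>" and "A \<subseteq> B"
  shows "\<psi> ++ (Some \<circ> \<phi>) |` A \<subseteq>\<^sub>m \<psi> ++ (Some \<circ> \<phi>) |` B"
  using assms unfolding consistent_def map_le_def
  by (auto simp: map_add_def restrict_map_def dom_def)

lemma cond_marg_eq_diff:
  assumes "\<And>S. integrable (measure_pmf P) (f S)" and "set_pmf P \<inter> cons_event \<psi> \<noteq> {}"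
  shows "cond_marg P f e \<psi> = cond_exp P \<psi> (f (insert e (dom \<psi>))) - cond_exp P \<psi> (f (dom \<psi>))"
  unfolding cond_marg_def cond_exp_def
  by (simp add: integrable_cond_pmf assms)

lemma has_bochner_integral_cond_exp_map_add_restrict:
  fixes X :: "('v \<Rightarrow> 'o) \<Rightarrow> real"
  assumes nonneg: "\<And>\<phi>. 0 \<le> X \<phi>" and X: "integrable (measure_pmf P) X"
    and \<psi>: "set_pmf P \<inter> cons_event \<psi> \<noteq> {}"
  shows "has_bochner_integral (measure_pmf (cond_pmf P (cons_event \<psi>)))
    (\<lambda>\<phi>. cond_exp P (\<psi> ++ (Some \<circ> \<phi>) |` B) X) (cond_exp P \<psi> X)"
proof -
  let ?Q = "cond_pmf P (cons_event \<psi>)"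
  have "cond_pmf ?Q {x. (Some \<circ> x) |` B = (Some \<circ> \<phi>) |` B}
      = cond_pmf P (cons_event (\<psi> ++ (Some \<circ> \<phi>) |` B))" if "\<phi> \<in> set_pmf ?Q" for \<phi>
  proof -
    have \<phi>: "\<phi> \<in> set_pmf P" "consistent \<phi> \<psi>"
      using that \<psi> by (auto simp: cons_event_def)
    then have "cons_event (\<psi> ++ (Some \<circ> \<phi>) |` B)
        = cons_event \<psi> \<inter> {x. (Some \<circ> x) |` B = (Some \<circ> \<phi>) |` B}"
      using cons_event_map_add[of \<phi> \<psi> "(Some \<circ> \<phi>) |` B"]
      by (simp add: consistent_restrict_map_iff cons_event_restrict_map)
    moreover have "\<phi> \<in> set_pmf P \<inter> cons_event (\<psi> ++ (Some \<circ> \<phi>) |` B)"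
      using \<phi> consistent_map_add_restrict_map by (auto simp: cons_event_def)
    ultimately show ?thesis
      by (metis Int_assoc cond_pmf_cond_pmf empty_iff)
  qed
  then have "has_bochner_integral (measure_pmf ?Q)
      (\<lambda>\<phi>. cond_exp P (\<psi> ++ (Some \<circ> \<phi>) |` B) X)
      = has_bochner_integral (measure_pmf ?Q)
      (\<lambda>\<phi>. measure_pmf.expectation (cond_pmf ?Q {x. (Some \<circ> x) |` B = (Some \<circ> \<phi>) |` B}) X)"
    by (intro ext has_bochner_integral_cong_AE) (auto simp: AE_measure_pmf_iff cond_exp_def)
  moreover have "has_bochner_integral (measure_pmf ?Q)
      (\<lambda>\<phi>. measure_pmf.expectation (cond_pmf ?Q {x. (Some \<circ> x) |` B = (Some \<circ> \<phi>) |` B}) X)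
      (cond_exp P \<psi> X)"
    unfolding cond_exp_def
    by (intro has_bochner_integral_cond_pmf_fibres integrable_cond_pmf nonneg X \<psi>)
  ultimately show ?thesis
    by simp
qed

lemma cond_exp_diminishing_returns:
  fixes P :: "('v \<Rightarrow> 'o) pmf" and f :: "'v set \<Rightarrow> ('v \<Rightarrow> 'o) \<Rightarrow> real"
  assumes nonneg: "\<And>S \<phi>. f S \<phi> \<ge> 0" and integrable: "\<And>S. integrable (measure_pmf P) (f S)"
    and adasub: "adaptive_submodular P f" and \<psi>: "set_pmf P \<inter> cons_event \<psi> \<noteq> {}"
    and "A \<subseteq> B" "e \<notin> dom \<psi>" "e \<notin> B"
  shows "cond_exp P \<psi> (f (dom \<psi> \<union> insert e B)) - cond_exp P \<psi> (f (dom \<psi> \<union> B))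
    \<le> cond_exp P \<psi> (f (dom \<psi> \<union> insert e A)) - cond_exp P \<psi> (f (dom \<psi> \<union> A))"
proof -
  let ?Q = "measure_pmf (cond_pmf P (cons_event \<psi>))"
  let ?ext = "\<lambda>X \<phi>. \<psi> ++ (Some \<circ> \<phi>) |` X"
  have support: "\<phi> \<in> set_pmf P" "consistent \<phi> \<psi>" "\<phi> \<in> cons_event (?ext X \<phi>)"
    if "\<phi> \<in> set_pmf (cond_pmf P (cons_event \<psi>))" for \<phi> X
    using that \<psi> consistent_map_add_restrict_map by (auto simp: cons_event_def)
  have marg: "has_bochner_integral ?Q (\<lambda>\<phi>. cond_marg P f e (?ext X \<phi>))
      (cond_exp P \<psi> (f (dom \<psi> \<union> insert e X)) - cond_exp P \<psi> (f (dom \<psi> \<union> X)))" for X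
  proof -
    have gain: "AE \<phi> in ?Q. cond_exp P (?ext X \<phi>) (f (dom \<psi> \<union> insert e X))
        - cond_exp P (?ext X \<phi>) (f (dom \<psi> \<union> X)) = cond_marg P f e (?ext X \<phi>)"
    proof (unfold AE_measure_pmf_iff, intro ballI)
      fix \<phi> assume "\<phi> \<in> set_pmf (cond_pmf P (cons_event \<psi>))"
      then have "set_pmf P \<inter> cons_event (?ext X \<phi>) \<noteq> {}"
        using support by blast
      moreover have "dom (?ext X \<phi>) = dom \<psi> \<union> X"
        by auto
      ultimately show "cond_exp P (?ext X \<phi>) (f (dom \<psi> \<union> insert e X))
          - cond_exp P (?ext X \<phi>) (f (dom \<psi> \<union> X)) = cond_marg P f e (?ext X \<phi>)"
        using cond_marg_eq_diff[OF integrable] by simp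
    qed
    have extend: "has_bochner_integral ?Q
        (\<lambda>\<phi>. cond_exp P (?ext X \<phi>) (f S)) (cond_exp P \<psi> (f S))" for S
      by (rule has_bochner_integral_cond_exp_map_add_restrict[OF nonneg integrable \<psi>])
    show ?thesis
      by (rule has_bochner_integral_cong_AE[THEN iffD1, OF _ _ gain
            has_bochner_integral_diff[OF extend extend]]) simp_all
  qed
  have "AE \<phi> in ?Q. cond_marg P f e (?ext B \<phi>) \<le> cond_marg P f e (?ext A \<phi>)"
  proof (unfold AE_measure_pmf_iff, intro ballI)
    fix \<phi> assume "\<phi> \<in> set_pmf (cond_pmf P (cons_event \<psi>))"
    note \<phi> = support[OF this]
    have pos: "measure_pmf.prob P (cons_event (?ext X \<phi>)) > 0" for X
      using \<phi> by (intro measure_pmf_posI)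
    have "e \<notin> dom (?ext B \<phi>)"
      using assms by auto
    with adasub[unfolded adaptive_submodular_def, rule_format,
        OF map_add_restrict_map_mono[OF \<phi>(2) \<open>A \<subseteq> B\<close>] pos pos]
    show "cond_marg P f e (?ext B \<phi>) \<le> cond_marg P f e (?ext A \<phi>)" .
  qed
  then have "integral\<^sup>L ?Q (\<lambda>\<phi>. cond_marg P f e (?ext B \<phi>))
      \<le> integral\<^sup>L ?Q (\<lambda>\<phi>. cond_marg P f e (?ext A \<phi>))"
    using marg[of A] marg[of B]
    by (intro Bochner_Integration.integral_mono_AE) (auto simp: has_bochner_integral_iff)
  then show ?thesis
    using marg[of A] marg[of B] by (simp add: has_bochner_integral_iff)
qed

lemma submodular_onI_diminishing_returns:
  assumes "finite D"
    and diminishing: "\<And>A B e. A \<subseteq> B \<Longrightarrow> B \<subseteq> D \<Longrightarrow> e \<in> D - B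
      \<Longrightarrow> g (insert e B) - g B \<le> g (insert e A) - g A"
  shows "submodular_on D g"
  unfolding submodular_on_def
proof (intro allI impI)
  have gain: "g (B \<union> X) - g B \<le> g (C \<union> X) - g C"
    if "finite X" "X \<subseteq> D - B" "C \<subseteq> B" "B \<subseteq> D" for X B C
    using that
  proof (induction X rule: finite_induct)
    case (insert x X)
    then have "g (insert x (B \<union> X)) - g (B \<union> X) \<le> g (insert x (C \<union> X)) - g (C \<union> X)"
      by (intro diminishing) auto
    with insert show ?case
      by simp
  qed simp
  fix A B assume "A \<subseteq> D" "B \<subseteq> D"
  then have "g (B \<union> (A - B)) - g B \<le> g (A \<inter> B \<union> (A - B)) - g (A \<inter> B)"
    by (intro gain finite_subset[OF _ \<open>finite D\<close>]) auto
  moreover have "B \<union> (A - B) = A \<union> B" "A \<inter> B \<union> (A - B) = A"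
    by auto
  ultimately show "g (A \<union> B) + g (A \<inter> B) \<le> g A + g B"
    by simp
qed

theorem lemma2:
  fixes P :: "('v::finite \<Rightarrow> 'o) pmf"
    and f :: "'v set \<Rightarrow> ('v \<Rightarrow> 'o) \<Rightarrow> real"
    and \<psi> :: "'v \<rightharpoonup> 'o"
  assumes nonneg: "\<And>S \<phi>. f S \<phi> \<ge> 0"
    and integrable: "\<And>S. integrable (measure_pmf P) (f S)"
    and adasub: "adaptive_submodular P f"
    and pos: "measure_pmf.prob P (cons_event \<psi>) > 0"
  shows "submodular_on (UNIV - dom \<psi>) (\<lambda>S. cond_exp P \<psi> (f (dom \<psi> \<union> S)))"
proof (rule submodular_onI_diminishing_returns)
  have "set_pmf P \<inter> cons_event \<psi> \<noteq> {}"
    using pos by (metis less_irrefl measure_pmf_zero_iff)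
  then show "cond_exp P \<psi> (f (dom \<psi> \<union> insert e B)) - cond_exp P \<psi> (f (dom \<psi> \<union> B))
      \<le> cond_exp P \<psi> (f (dom \<psi> \<union> insert e A)) - cond_exp P \<psi> (f (dom \<psi> \<union> A))"
    if "A \<subseteq> B" "B \<subseteq> UNIV - dom \<psi>" "e \<in> UNIV - dom \<psi> - B" for A B e
    using that by (intro cond_exp_diminishing_returns[OF nonneg integrable adasub]) auto
qed simp

end
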